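(* Let $m>n$ be coprime positive integers, $\alpha=\epsilon_i-\delta_j$, $\lambda\in X_\alpha$, $\lambda^+=t_\alpha(\lambda)$, $\Lambda=x(\lambda)$ and $\Lambda^+=\tau_\alpha(\Lambda)$. If $(\Lambda^+,\beta)=0$ for $\beta=\epsilon_i-\delta_k$ with $k\in[m]$, then one of the following holds: (a) $k=j+1$, $\lambda'_j=\lambda'_{j+1}$ and $\beta=\epsilon_i-\delta_{j+1}$; (b) $\alpha=\epsilon_n-\delta_m$, $\beta=\epsilon_n-\delta_1$, $\lambda_1<m$, and $(m,1^{n-1})\subseteq\lambda^+$ (i.e. $\lambda^+_1=m$ and $\lambda^+_n\ge1$).
   Context: $X$ is the set of partitions $\lambda=(\lambda_1\ge\dots\ge\lambda_n\ge0)$ with $\lambda_1\le m$, drawn in an $n\times m$ rectangle with rows $\epsilon_1,\dots,\epsilon_n$ top to bottom and columns $\delta_1,\dots,\delta_m$; the diagram consists of boxes $\epsilon_i-\delta_j$ with $j\le\lambda_{n+1-i}$; $\lambda'_j=\#\{i:\lambda_i\ge j\}$. $X_\alpha$: diagrams for which box $\alpha$ is an outer corner; $t_\alpha$ adds that box. $x(\lambda)=(a_1,\dots,a_n|b_1,\dots,b_m)$ with $a_i=m(n-i)+n\lambda_{n+1-i}$, $b_j=n(j-1)+m\lambda'_j$; $\tau_\alpha$ adds $n$ to $a_i$ and $m$ to $b_j$. For $\Lambda=(a|b)$ and $\gamma=\epsilon_p-\delta_q$, $(\Lambda,\gamma)=a_p-b_q$. *)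

theory Defs
  imports Main
begin

definition Xset :: "nat \<Rightarrow> nat \<Rightarrow> (nat \<Rightarrow> nat) set" where
  "Xset n m = {lam. (\<forall>i. (i = 0 \<or> n < i) \<longrightarrow> lam i = 0)
                  \<and> (\<forall>i. 1 \<le> i \<and> i < n \<longrightarrow> lam (i+1) \<le> lam i)
                  \<and> (n \<ge> 1 \<longrightarrow> lam 1 \<le> m)}"

definition conjugate :: "nat \<Rightarrow> (nat \<Rightarrow> nat) \<Rightarrow> nat \<Rightarrow> nat" where
  "conjugate n lam j = card {i. 1 \<le> i \<and> i \<le> n \<and> j \<le> lam i}"

text \<open>Young diagram in the n x m rectangle: box eps_i - delta_j is the pair (i,j),
  present iff j <= lambda_{n+1-i}.\<close>
definition diagram :: "nat \<Rightarrow> (nat \<Rightarrow> nat) \<Rightarrow> (nat \<times> nat) set" where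
  "diagram n lam = {(i,j). 1 \<le> i \<and> i \<le> n \<and> 1 \<le> j \<and> j \<le> lam (n + 1 - i)}"

definition t_box :: "nat \<Rightarrow> nat \<times> nat \<Rightarrow> (nat \<Rightarrow> nat) \<Rightarrow> (nat \<Rightarrow> nat)" where
  "t_box n \<alpha> lam = lam (n + 1 - fst \<alpha> := lam (n + 1 - fst \<alpha>) + 1)"

definition Xalpha :: "nat \<Rightarrow> nat \<Rightarrow> nat \<times> nat \<Rightarrow> (nat \<Rightarrow> nat) set" where
  "Xalpha n m \<alpha> = {lam \<in> Xset n m.
      \<alpha> \<notin> diagram n lam \<and>
      t_box n \<alpha> lam \<in> Xset n m \<and>
      diagram n (t_box n \<alpha> lam) = diagram n lam \<union> {\<alpha>}}"

definition xmap :: "nat \<Rightarrow> nat \<Rightarrow> (nat \<Rightarrow> nat) \<Rightarrow> (nat \<Rightarrow> int) \<times> (nat \<Rightarrow> int)" where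
  "xmap n m lam =
     ((\<lambda>i. int m * (int n - int i) + int n * int (lam (n + 1 - i))),
      (\<lambda>j. int n * (int j - 1) + int m * int (conjugate n lam j)))"

definition tau :: "nat \<Rightarrow> nat \<Rightarrow> nat \<times> nat \<Rightarrow> (nat \<Rightarrow> int) \<times> (nat \<Rightarrow> int)
                      \<Rightarrow> (nat \<Rightarrow> int) \<times> (nat \<Rightarrow> int)" where
  "tau n m \<alpha> \<Lambda> = ((fst \<Lambda>)(fst \<alpha> := fst \<Lambda> (fst \<alpha>) + int n),
                     (snd \<Lambda>)(snd \<alpha> := snd \<Lambda> (snd \<alpha>) + int m))"

definition pairing :: "(nat \<Rightarrow> int) \<times> (nat \<Rightarrow> int) \<Rightarrow> nat \<times> nat \<Rightarrow> int" where
  "pairing \<Lambda> \<gamma> = fst \<Lambda> (fst \<gamma>) - snd \<Lambda> (snd \<gamma>)"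

end

theory Submission
  imports Defs "HOL-Computational_Algebra.Primes"
begin

text \<open>Adding the outer corner alpha = (i, j) commutes with x, i.e. tau_alpha (x lambda) =
  x (t_alpha lambda), so the hypothesis reads a_i - b_k = 0 for Lambda+ = x(lambda+), where
  row n + 1 - i of lambda+ has length j.  This is m (n - i - lambda+'_k) = n (k - 1 - j), so by
  coprimality m divides k - 1 - j, which lies in [-m, m - 2].  Either k = j + 1, and then
  lambda+'_k = n - i = lambda'_j; or k = 1 and j = m, and then lambda+'_1 = 2n - i \<le> n
  forces i = n and a full first column of lambda+.\<close>

lemma coprime_mult_eq_cases:
  fixes m n :: nat and x y :: int
  assumes "coprime m n" "0 < m" "int m * x = int n * y" "- int m \<le> y" "y < int m"
  shows "y = 0 \<or> y = - int m"
proof -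
  have "int m dvd int n * y" using assms(3) by (metis dvd_triv_left)
  moreover have "coprime (int m) (int n)" using assms(1) by simp
  ultimately have "int m dvd y" using coprime_dvd_mult_right_iff by blast
  then obtain t where t: "y = int m * t" by (elim dvdE)
  have "int m * (- 1) \<le> int m * t" "int m * t < int m * 1" using assms(4,5) t by simp_all
  then have "- 1 \<le> t" "t < 1"
    using assms(2) by (simp_all only: mult_le_cancel_left_pos mult_less_cancel_left_pos of_nat_0_less_iff)
  then have "t = 0 \<or> t = - 1" by linarith
  then show ?thesis using t by auto
qed

lemma pairing_zero_cases:
  fixes m n i j k c :: nat
  assumes "coprime m n" "1 \<le> i" "i \<le> n" "1 \<le> j" "j \<le> m" "1 \<le> k" "k \<le> m" "c \<le> n"
    and "int m * (int n - int i) + int n * int j = int n * (int k - 1) + int m * int c"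
  shows "(k = j + 1 \<and> c = n - i) \<or> (k = 1 \<and> j = m \<and> i = n \<and> c = n)"
proof -
  have eq: "int m * (int n - int i - int c) = int n * (int k - 1 - int j)"
    using assms(9) by (simp add: algebra_simps)
  have "int k - 1 - int j = 0 \<or> int k - 1 - int j = - int m"
    by (rule coprime_mult_eq_cases[OF assms(1) _ eq]) (use assms(4-7) in auto)
  then show ?thesis
  proof
    assume "int k - 1 - int j = 0"
    moreover have "0 < m" using assms(4,5) by simp
    ultimately have "int n - int i - int c = 0" using eq by simp
    then show ?thesis using \<open>int k - 1 - int j = 0\<close> assms(3) by linarith
  next
    assume y: "int k - 1 - int j = - int m"
    then have "int m * (int n - int i - int c) = int m * (- int n)" using eq by simp
    then have "int n - int i - int c = - int n" using assms(4,5) by (simp only: mult_left_cancel)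
    then show ?thesis using y assms(3-8) by linarith
  qed
qed

lemma Xset_antimono:
  assumes "lam \<in> Xset n m" "1 \<le> a" "a \<le> b" "b \<le> n"
  shows "lam b \<le> lam a"
  using assms(3,4)
proof (induction b rule: dec_induct)
  case base
  then show ?case by simp
next
  case (step b)
  have "lam (b + 1) \<le> lam b" using assms(1,2) step unfolding Xset_def by auto
  then show ?case using step by simp
qed

lemma conjugate_le: "conjugate n lam q \<le> n"
proof -
  have "conjugate n lam q \<le> card {1..n}"
    unfolding conjugate_def by (rule card_mono) auto
  then show ?thesis by simp
qed

lemma conjugate_eq_imp_le:
  assumes "conjugate n lam q = n" "1 \<le> a" "a \<le> n"
  shows "q \<le> lam a"
proof -
  have "{b. 1 \<le> b \<and> b \<le> n \<and> q \<le> lam b} = {1..n}"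
  proof (rule card_subset_eq)
    show "card {b. 1 \<le> b \<and> b \<le> n \<and> q \<le> lam b} = card {1..n}"
      using assms(1) unfolding conjugate_def by simp
  qed auto
  moreover have "a \<in> {1..n}" using assms(2,3) by simp
  ultimately show ?thesis by (metis (no_types, lifting) mem_Collect_eq)
qed

lemma conjugate_eq_step:
  assumes "lam \<in> Xset n m" "1 \<le> r" "r \<le> n" "lam r < q" "2 \<le> r \<Longrightarrow> q \<le> lam (r - 1)"
  shows "conjugate n lam q = r - 1"
proof -
  have "{a. 1 \<le> a \<and> a \<le> n \<and> q \<le> lam a} = {1..<r}"
  proof (intro set_eqI iffI)
    fix a assume a: "a \<in> {a. 1 \<le> a \<and> a \<le> n \<and> q \<le> lam a}"
    have "a < r"
    proof (rule ccontr)
      assume "\<not> a < r"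
      then have "lam a \<le> lam r" using Xset_antimono[OF assms(1,2)] a by simp
      then show False using a assms(4) by simp
    qed
    then show "a \<in> {1..<r}" using a by simp
  next
    fix a assume a: "a \<in> {1..<r}"
    then have "a \<le> r - 1" "r - 1 \<le> n" using assms(3) by auto
    then have "lam (r - 1) \<le> lam a" using Xset_antimono[OF assms(1)] a by simp
    then show "a \<in> {a. 1 \<le> a \<and> a \<le> n \<and> q \<le> lam a}" using a assms(3,5) by simp
  qed
  then show ?thesis unfolding conjugate_def by simp
qed

lemma conjugate_add_box:
  assumes "1 \<le> r" "r \<le> n"
  shows "conjugate n (lam (r := lam r + 1)) q
           = conjugate n lam q + (if q = lam r + 1 then 1 else 0)"
proof -
  let ?S = "{a. 1 \<le> a \<and> a \<le> n \<and> q \<le> lam a}"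
  have "{a. 1 \<le> a \<and> a \<le> n \<and> q \<le> (lam (r := lam r + 1)) a}
          = (if q = lam r + 1 then insert r ?S else ?S)"
    using assms by (auto split: if_splits)
  moreover have "finite ?S" by simp
  ultimately show ?thesis unfolding conjugate_def by simp
qed

lemma tau_xmap:
  assumes "1 \<le> i" "i \<le> n" "j = lam (n + 1 - i) + 1"
  shows "tau n m (i, j) (xmap n m lam) = xmap n m (t_box n (i, j) lam)"
proof (rule prod_eqI)
  show "fst (tau n m (i, j) (xmap n m lam)) = fst (xmap n m (t_box n (i, j) lam))"
    using assms by (auto simp: tau_def xmap_def t_box_def fun_eq_iff algebra_simps)
  have "1 \<le> n + 1 - i" "n + 1 - i \<le> n" using assms(1,2) by simp_all
  from conjugate_add_box[OF this, of lam]
  show "snd (tau n m (i, j) (xmap n m lam)) = snd (xmap n m (t_box n (i, j) lam))"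
    using assms(3) by (auto simp: tau_def xmap_def t_box_def fun_eq_iff algebra_simps)
qed

lemma Xalpha_row_length:
  assumes "lam \<in> Xalpha n m (i, j)" "1 \<le> i" "i \<le> n"
  shows "lam (n + 1 - i) + 1 = j"
proof -
  have "(i, j) \<in> diagram n (t_box n (i, j) lam)" and "(i, j) \<notin> diagram n lam"
    using assms(1) unfolding Xalpha_def by auto
  then show ?thesis using assms(2,3) unfolding diagram_def t_box_def by auto
qed

lemma Xalpha_t_box:
  assumes "lam \<in> Xalpha n m (i, j)" "1 \<le> i" "i \<le> n"
  shows "t_box n (i, j) lam = lam (n + 1 - i := j)"
  using Xalpha_row_length[OF assms] unfolding t_box_def by simp

lemma Xalpha_conjugate:
  assumes "lam \<in> Xalpha n m (i, j)" "1 \<le> i" "i \<le> n"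
  shows "conjugate n lam j = n - i"
proof -
  define r where "r = n + 1 - i"
  have r: "1 \<le> r" "r \<le> n" "r - 1 \<noteq> r" using assms(2,3) unfolding r_def by simp_all
  have X: "lam \<in> Xset n m" and tX: "t_box n (i, j) lam \<in> Xset n m"
    using assms(1) unfolding Xalpha_def by auto
  have row: "lam r + 1 = j" unfolding r_def by (rule Xalpha_row_length[OF assms])
  have "j \<le> lam (r - 1)" if "2 \<le> r"
    using Xset_antimono[OF tX, of "r - 1" r] that r
    unfolding Xalpha_t_box[OF assms] r_def[symmetric] by simp
  then have "conjugate n lam j = r - 1"
    using conjugate_eq_step[OF X r(1,2), of j] row by simp
  then show ?thesis unfolding r_def by simp
qed

theorem lemma4p7:
  fixes n m i j k :: nat and lam :: "nat \<Rightarrow> nat"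
  assumes "0 < n" "n < m" "coprime m n"
    and "1 \<le> i" "i \<le> n" "1 \<le> j" "j \<le> m"
    and "lam \<in> Xalpha n m (i, j)"
    and "1 \<le> k" "k \<le> m"
    and "pairing (tau n m (i, j) (xmap n m lam)) (i, k) = 0"
  shows "(k = j + 1 \<and> conjugate n lam j = conjugate n lam (j + 1) \<and> (i, k) = (i, j + 1))
       \<or> ((i, j) = (n, m) \<and> (i, k) = (n, 1) \<and> lam 1 < m
          \<and> t_box n (i, j) lam 1 = m \<and> t_box n (i, j) lam n \<ge> 1)"
proof -
  define lam' where "lam' = t_box n (i, j) lam"
  have row: "lam (n + 1 - i) + 1 = j" by (rule Xalpha_row_length[OF assms(8,4,5)])
  have lam'_row: "lam' = lam (n + 1 - i := j)"
    unfolding lam'_def by (rule Xalpha_t_box[OF assms(8,4,5)])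
  have conj': "conjugate n lam' q = conjugate n lam q + (if q = j then 1 else 0)" for q
    unfolding lam'_def t_box_def using conjugate_add_box[of "n + 1 - i" n lam q] assms(4,5) row
    by simp
  have "pairing (xmap n m lam') (i, k) = 0"
    using assms(11) tau_xmap[of i n j lam m] assms(4,5) row unfolding lam'_def by simp
  then have "int m * (int n - int i) + int n * int j
               = int n * (int k - 1) + int m * int (conjugate n lam' k)"
    unfolding pairing_def xmap_def lam'_row using assms(4) by simp
  from pairing_zero_cases[OF assms(3,4,5,6,7,9,10) conjugate_le this]
  show ?thesis
  proof (elim disjE conjE)
    assume "k = j + 1" "conjugate n lam' k = n - i"
    then show ?thesis using conj' Xalpha_conjugate[OF assms(8,4,5)] by simp
  next
    assume "k = 1" "j = m" "i = n" "conjugate n lam' k = n"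
    moreover have "1 \<le> lam' n"
      using calculation conjugate_eq_imp_le[of n lam' 1 n] assms(1) by simp
    moreover have "lam' 1 = m" "lam 1 < m" using calculation(2,3) lam'_row row by simp_all
    ultimately show ?thesis unfolding lam'_def by simp
  qed
qed

end
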